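(* Let $\underline{\lambda}=(\lambda_1\ge\dots\ge\lambda_{n+1})$ and $\underline{\mu}=(\mu_1\ge\dots\ge\mu_n)$ be real sequences such that there exists $p\in\mathcal{O}_\Lambda$ whose bottom-right $n\times n$ principal submatrix is $\mathrm{diag}(\mu_1,\dots,\mu_n)$ (equivalently, $\lambda_1\ge\mu_1\ge\lambda_2\ge\dots\ge\mu_n\ge\lambda_{n+1}$). Let $\mu\in[\underline{\mu}]$ be such that the component of the interlacing pattern of $(\underline{\lambda},\underline{\mu})$ labelled $\mu$ is not an M-shape. Then $C_\mu=0$ if and only if the component labelled $\mu$ is a W-shape.
   Context: $\mathcal{O}_\Lambda$ is the set of $(n+1)\times(n+1)$ Hermitian matrices with eigenvalues $\lambda_1,\dots,\lambda_{n+1}$. Notation: $[\underline{\tau}]$ is the set of distinct values of a finite sequence $\underline{\tau}$, $n_v(\underline{\tau})$ the number of occurrences of $v$ in it. For each value $v$ occurring in $\underline{\lambda}$ or $\underline{\mu}$, the component of the interlacing pattern labelled $v$ is an M-shape if $n_v(\underline{\mu})=n_v(\underline{\lambda})+1$, a W-shape if $n_v(\underline{\lambda})=n_v(\underline{\mu})+1$, and a parallelogram-shape if $n_v(\underline{\lambda})=n_v(\underline{\mu})$ (exactly one of these holds). For $\tau\in[\underline{\mu}]$ with M-shape component, $r_\tau>0$ is defined by $r_\tau^2=-\prod_{\lambda\in[\underline{\lambda}],\,\text{W-shape}}(\tau-\lambda)\prod_{\sigma\in[\underline{\mu}],\,\text{M-shape},\,\sigma\ne\tau}\frac{1}{\tau-\sigma}$;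 otherwise $r_\tau=0$. For $\mu\in[\underline{\mu}]$ whose component is not an M-shape, $C_\mu=\sum_{i=1}^{n+1}\lambda_i-\sum_{i=1}^n\mu_i-\mu+\sum_{\tau\in[\underline{\mu}],\,\text{M-shape}}\frac{r_\tau^2}{\mu-\tau}$. *)

theory Defs
  imports Complex_Main
begin

text \<open>Sequences are functions nat => real; lam is indexed by 1..n+1, mu by 1..n.\<close>

definition lam_vals :: "nat \<Rightarrow> (nat \<Rightarrow> real) \<Rightarrow> real set" where
  "lam_vals n lam = lam ` {1..n+1}"

definition mu_vals :: "nat \<Rightarrow> (nat \<Rightarrow> real) \<Rightarrow> real set" where
  "mu_vals n mu = mu ` {1..n}"

definition n_lam :: "nat \<Rightarrow> (nat \<Rightarrow> real) \<Rightarrow> real \<Rightarrow> nat" where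
  "n_lam n lam v = card {i \<in> {1..n+1}. lam i = v}"

definition n_mu :: "nat \<Rightarrow> (nat \<Rightarrow> real) \<Rightarrow> real \<Rightarrow> nat" where
  "n_mu n mu v = card {i \<in> {1..n}. mu i = v}"

definition M_shape :: "nat \<Rightarrow> (nat \<Rightarrow> real) \<Rightarrow> (nat \<Rightarrow> real) \<Rightarrow> real \<Rightarrow> bool" where
  "M_shape n lam mu v \<longleftrightarrow> n_mu n mu v = n_lam n lam v + 1"

definition W_shape :: "nat \<Rightarrow> (nat \<Rightarrow> real) \<Rightarrow> (nat \<Rightarrow> real) \<Rightarrow> real \<Rightarrow> bool" where
  "W_shape n lam mu v \<longleftrightarrow> n_lam n lam v = n_mu n mu v + 1"

definition P_shape :: "nat \<Rightarrow> (nat \<Rightarrow> real) \<Rightarrow> (nat \<Rightarrow> real) \<Rightarrow> real \<Rightarrow> bool" where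
  "P_shape n lam mu v \<longleftrightarrow> n_lam n lam v = n_mu n mu v"

text \<open>The right-hand side of the defining equation of r_tau^2.\<close>
definition r_sq_expr :: "nat \<Rightarrow> (nat \<Rightarrow> real) \<Rightarrow> (nat \<Rightarrow> real) \<Rightarrow> real \<Rightarrow> real" where
  "r_sq_expr n lam mu \<tau> =
     - (\<Prod>l\<in>{l \<in> lam_vals n lam. W_shape n lam mu l}. (\<tau> - l))
     * (\<Prod>\<sigma>\<in>{\<sigma> \<in> mu_vals n mu. M_shape n lam mu \<sigma> \<and> \<sigma> \<noteq> \<tau>}. 1 / (\<tau> - \<sigma>))"

definition r_coef :: "nat \<Rightarrow> (nat \<Rightarrow> real) \<Rightarrow> (nat \<Rightarrow> real) \<Rightarrow> real \<Rightarrow> real" where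
  "r_coef n lam mu \<tau> =
     (if \<tau> \<in> mu_vals n mu \<and> M_shape n lam mu \<tau> then sqrt (r_sq_expr n lam mu \<tau>) else 0)"

definition C_coef :: "nat \<Rightarrow> (nat \<Rightarrow> real) \<Rightarrow> (nat \<Rightarrow> real) \<Rightarrow> real \<Rightarrow> real" where
  "C_coef n lam mu m =
     (\<Sum>i=1..n+1. lam i) - (\<Sum>i=1..n. mu i) - m
     + (\<Sum>\<tau>\<in>{\<tau> \<in> mu_vals n mu. M_shape n lam mu \<tau>}. (r_coef n lam mu \<tau>)^2 / (m - \<tau>))"

end

theory Submission
  imports Defs
begin

(*
  Let P(x) be the product of (x - w) over the W-shape values w and Q(x) the product of
  (x - s) over the M-shape values s. Interlacing forces every multiplicity difference
  n_v(lam) - n_v(mu) into {-1, 0, 1}; summing it against 1, against v, and against the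
  indicator of (s, oo) shows that deg P = deg Q + 1, that the trace difference
  sum lam - sum mu equals sum W - sum M, and that exactly one more W-value than M-values
  lies above each M-value s. The last fact makes r_s^2 = -P(s)/Q'(s) nonnegative, so the
  partial fraction expansion P/Q = x - (sum W - sum M) + sum_s P(s)/Q'(s)/(x - s) gives
  C_m = -P(m)/Q(m) for every m that is not an M-value. Hence C_m = 0 iff m is a W-value.
*)

lemma partial_fraction_mult_moebius:
  fixes x s w c :: "'a::field" and a :: "'a \<Rightarrow> 'a"
  assumes "finite M" "s \<notin> M" "x \<notin> M" "x \<noteq> s"
  shows "(x - w) / (x - s) * (x - c + (\<Sum>t\<in>M. a t / (x - t)))
    = x - (c + w - s) + (s - w) * (s - c + (\<Sum>t\<in>M. a t / (s - t))) / (x - s)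
      + (\<Sum>t\<in>M. a t * (t - w) / (t - s) / (x - t))"
proof -
  have summand: "(x - w) / (x - s) * (a t / (x - t))
      = (s - w) * (a t / (s - t)) / (x - s) + a t * (t - w) / (t - s) / (x - t)" if "t \<in> M" for t
  proof -
    have "t \<noteq> s" "x \<noteq> t" using that assms by auto
    with assms show ?thesis by (simp add: divide_simps) (simp add: algebra_simps)
  qed
  have "(x - w) / (x - s) * (x - c) = x - (c + w - s) + (s - w) * (s - c) / (x - s)"
    using assms by (simp add: divide_simps) (simp add: algebra_simps)
  moreover have "(x - w) / (x - s) * (\<Sum>t\<in>M. a t / (x - t))
      = (\<Sum>t\<in>M. (s - w) * (a t / (s - t)) / (x - s) + a t * (t - w) / (t - s) / (x - t))"
    unfolding sum_distrib_left using summand by (intro sum.cong) auto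
  ultimately show ?thesis
    by (simp add: distrib_left add_divide_distrib sum.distrib sum_distrib_left sum_divide_distrib)
qed

lemma prod_div_prod_partial_fraction:
  fixes W M :: "'a::field set"
  assumes "finite M" "finite W" "card W = card M + 1" "x \<notin> M"
  shows "(\<Prod>w\<in>W. x - w) / (\<Prod>s\<in>M. x - s)
    = x - (\<Sum>W - \<Sum>M) + (\<Sum>s\<in>M. (\<Prod>w\<in>W. s - w) / (\<Prod>t\<in>M - {s}. s - t) / (x - s))"
  using assms
proof (induction M arbitrary: W x rule: finite_induct)
  case empty
  then obtain w where "W = {w}" by (auto simp: card_1_singleton_iff)
  then show ?case by simp
next
  case (insert s M W x)
  then obtain w where w: "w \<in> W" by fastforce
  define W' where "W' = W - {w}"
  have W': "finite W'" "card W' = card M + 1" using insert w by (auto simp: W'_def)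
  have prod_W: "(\<Prod>v\<in>W. y - v) = (y - w) * (\<Prod>v\<in>W'. y - v)" for y
    using w insert.prems(1) by (simp add: W'_def prod.remove)
  have sum_W: "\<Sum>W = w + \<Sum>W'"
    using w insert.prems(1) by (simp add: W'_def sum.remove)
  define c where "c = \<Sum>W' - \<Sum>M"
  define res where "res t = (\<Prod>v\<in>W'. t - v) / (\<Prod>u\<in>M - {t}. t - u)" for t
  have IH: "(\<Prod>v\<in>W'. y - v) / (\<Prod>u\<in>M. y - u) = y - c + (\<Sum>t\<in>M. res t / (y - t))"
    if "y \<notin> M" for y
    using insert.IH[OF W' that] by (simp add: c_def res_def)
  have res_s: "(\<Prod>v\<in>W. s - v) / (\<Prod>u\<in>insert s M - {s}. s - u)
      = (s - w) * (s - c + (\<Sum>t\<in>M. res t / (s - t)))"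
  proof -
    have "insert s M - {s} = M" using insert.hyps by auto
    then show ?thesis
      using IH[OF insert.hyps(2)] by (simp add: prod_W times_divide_eq_right[symmetric])
  qed
  have res_t: "(\<Prod>v\<in>W. t - v) / (\<Prod>u\<in>insert s M - {t}. t - u) = res t * (t - w) / (t - s)"
    if "t \<in> M" for t
  proof -
    have "insert s M - {t} = insert s (M - {t})" "s \<notin> M - {t}" using insert.hyps that by auto
    then show ?thesis using insert.hyps(1) by (simp add: prod_W res_def ac_simps)
  qed
  have "(\<Prod>v\<in>W. x - v) / (\<Prod>u\<in>insert s M. x - u)
      = (x - w) / (x - s) * ((\<Prod>v\<in>W'. x - v) / (\<Prod>u\<in>M. x - u))"
    using insert.hyps by (simp add: prod_W)
  also have "\<dots> = (x - w) / (x - s) * (x - c + (\<Sum>t\<in>M. res t / (x - t)))"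
    using insert.prems IH by simp
  also have "\<dots> = x - (c + w - s) + (s - w) * (s - c + (\<Sum>t\<in>M. res t / (s - t))) / (x - s)
      + (\<Sum>t\<in>M. res t * (t - w) / (t - s) / (x - t))"
    using insert by (intro partial_fraction_mult_moebius) auto
  also have "\<dots> = x - (\<Sum>W - \<Sum>(insert s M))
      + (\<Sum>t\<in>insert s M. (\<Prod>v\<in>W. t - v) / (\<Prod>u\<in>insert s M - {t}. t - u) / (x - t))"
  proof -
    have "(\<Sum>t\<in>M. (\<Prod>v\<in>W. t - v) / (\<Prod>u\<in>insert s M - {t}. t - u) / (x - t))
        = (\<Sum>t\<in>M. res t * (t - w) / (t - s) / (x - t))"
      by (intro sum.cong refl) (simp only: res_t)
    moreover have "\<Sum>W - \<Sum>(insert s M) = c + w - s"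
      using insert.hyps by (simp add: sum_W c_def)
    moreover note sum.insert[OF insert.hyps,
        of "\<lambda>t. (\<Prod>v\<in>W. t - v) / (\<Prod>u\<in>insert s M - {t}. t - u) / (x - t)"]
    ultimately show ?thesis by (simp only: res_s add.assoc)
  qed
  finally show ?case .
qed

lemma prod_eq_neg_one_power_card_neg_mult_prod_abs:
  fixes f :: "'a \<Rightarrow> 'b::linordered_idom"
  assumes "finite A"
  shows "prod f A = (-1) ^ card {a\<in>A. f a < 0} * (\<Prod>a\<in>A. \<bar>f a\<bar>)"
  using assms
proof (induction A rule: finite_induct)
  case (insert x F)
  have "{a\<in>insert x F. f a < 0} = (if f x < 0 then insert x {a\<in>F. f a < 0} else {a\<in>F. f a < 0})"
    by auto
  with insert show ?case by (auto simp: abs_if)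
qed simp

lemma sum_comp_eq_sum_card_fibres:
  fixes g :: "'b \<Rightarrow> 'c::comm_semiring_1"
  assumes "finite I" "finite V" "f ` I \<subseteq> V"
  shows "(\<Sum>i\<in>I. g (f i)) = (\<Sum>v\<in>V. of_nat (card {i\<in>I. f i = v}) * g v)"
proof -
  have "(\<Sum>i\<in>I. g (f i)) = (\<Sum>v\<in>V. \<Sum>i\<in>{i\<in>I. f i = v}. g (f i))"
    by (rule sum.group[OF assms, symmetric])
  also have "\<dots> = (\<Sum>v\<in>V. of_nat (card {i\<in>I. f i = v}) * g v)"
    by (intro sum.cong refl) simp
  finally show ?thesis .
qed

lemma card_ge_eq_card_gt_add_card_eq:
  fixes f :: "'a \<Rightarrow> 'b::linorder"
  assumes "finite I"
  shows "card {i\<in>I. t \<le> f i} = card {i\<in>I. t < f i} + card {i\<in>I. f i = t}"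
proof -
  have "{i\<in>I. t \<le> f i} = {i\<in>I. t < f i} \<union> {i\<in>I. f i = t}" by auto
  moreover have "card ({i\<in>I. t < f i} \<union> {i\<in>I. f i = t})
      = card {i\<in>I. t < f i} + card {i\<in>I. f i = t}"
    using assms by (intro card_Un_disjoint) auto
  ultimately show ?thesis by simp
qed

lemma W_shape_in_lam_vals: "W_shape n lam mu v \<Longrightarrow> v \<in> lam_vals n lam"
proof -
  assume "W_shape n lam mu v"
  then have "n_lam n lam v \<noteq> 0" by (simp add: W_shape_def)
  then have "{i \<in> {1..n+1}. lam i = v} \<noteq> {}" unfolding n_lam_def by (metis card.empty)
  then show ?thesis by (auto simp: lam_vals_def)
qed

lemma M_shape_in_mu_vals: "M_shape n lam mu v \<Longrightarrow> v \<in> mu_vals n mu"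
proof -
  assume "M_shape n lam mu v"
  then have "n_mu n mu v \<noteq> 0" by (simp add: M_shape_def)
  then have "{i \<in> {1..n}. mu i = v} \<noteq> {}" unfolding n_mu_def by (metis card.empty)
  then show ?thesis by (auto simp: mu_vals_def)
qed

locale interlacing =
  fixes n :: nat and lam mu :: "nat \<Rightarrow> real"
  assumes interlace: "\<forall>i\<in>{1..n}. lam i \<ge> mu i \<and> mu i \<ge> lam (i+1)"
begin

lemma card_upward_closed_bounds:
  assumes up: "\<And>x y. x \<le> y \<Longrightarrow> P x \<Longrightarrow> P y"
  shows "card {i\<in>{1..n}. P (mu i)} \<le> card {i\<in>{1..n+1}. P (lam i)}"
    and "card {i\<in>{1..n+1}. P (lam i)} \<le> card {i\<in>{1..n}. P (mu i)} + 1"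
proof -
  have "{i\<in>{1..n}. P (mu i)} \<subseteq> {i\<in>{1..n+1}. P (lam i)}"
    using interlace by (auto intro: up)
  then show "card {i\<in>{1..n}. P (mu i)} \<le> card {i\<in>{1..n+1}. P (lam i)}"
    by (intro card_mono) auto
  have "{i\<in>{1..n+1}. P (lam i)} \<subseteq> insert 1 (Suc ` {i\<in>{1..n}. P (mu i)})"
  proof
    fix i assume i: "i \<in> {i\<in>{1..n+1}. P (lam i)}"
    show "i \<in> insert 1 (Suc ` {i\<in>{1..n}. P (mu i)})"
    proof (cases "i = 1")
      case False
      then obtain j where j: "i = Suc j" "j \<in> {1..n}" using i by (cases i) auto
      moreover have "lam (Suc j) \<le> mu j" using interlace j(2) by auto
      ultimately have "P (mu j)" using i up by auto
      with j show ?thesis by blast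
    qed simp
  qed
  then have "card {i\<in>{1..n+1}. P (lam i)} \<le> card (insert 1 (Suc ` {i\<in>{1..n}. P (mu i)}))"
    by (intro card_mono) auto
  also have "\<dots> \<le> card {i\<in>{1..n}. P (mu i)} + 1"
    by (simp add: card_insert_if card_image)
  finally show "card {i\<in>{1..n+1}. P (lam i)} \<le> card {i\<in>{1..n}. P (mu i)} + 1" .
qed

lemma card_ge_gt_bounds:
  "card {i\<in>{1..n}. v \<le> mu i} \<le> card {i\<in>{1..n+1}. v \<le> lam i}"
  "card {i\<in>{1..n+1}. v \<le> lam i} \<le> card {i\<in>{1..n}. v \<le> mu i} + 1"
  "card {i\<in>{1..n}. v < mu i} \<le> card {i\<in>{1..n+1}. v < lam i}"
  "card {i\<in>{1..n+1}. v < lam i} \<le> card {i\<in>{1..n}. v < mu i} + 1"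
  by (rule card_upward_closed_bounds; auto)+

lemma multiplicity_diff_bounds:
  "n_lam n lam v \<le> n_mu n mu v + 1" "n_mu n mu v \<le> n_lam n lam v + 1"
  using card_ge_gt_bounds[of v]
    card_ge_eq_card_gt_add_card_eq[of "{1..n}" v mu]
    card_ge_eq_card_gt_add_card_eq[of "{1..n+1}" v lam]
  unfolding n_lam_def n_mu_def by simp_all

lemma M_shape_card_gt_lam:
  assumes "M_shape n lam mu v"
  shows "card {i\<in>{1..n+1}. v < lam i} = card {i\<in>{1..n}. v < mu i} + 1"
  using assms card_ge_gt_bounds[of v]
    card_ge_eq_card_gt_add_card_eq[of "{1..n}" v mu]
    card_ge_eq_card_gt_add_card_eq[of "{1..n+1}" v lam]
  unfolding M_shape_def n_lam_def n_mu_def by simp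

definition W_values :: "real set" where
  "W_values = {l \<in> lam_vals n lam. W_shape n lam mu l}"

definition M_values :: "real set" where
  "M_values = {s \<in> mu_vals n mu. M_shape n lam mu s}"

lemma finite_W_values: "finite W_values"
  by (simp add: W_values_def lam_vals_def)

lemma finite_M_values: "finite M_values"
  by (simp add: M_values_def mu_vals_def)

lemma sum_lam_minus_sum_mu:
  fixes g :: "real \<Rightarrow> real"
  shows "(\<Sum>i=1..n+1. g (lam i)) - (\<Sum>i=1..n. g (mu i))
    = (\<Sum>v\<in>W_values. g v) - (\<Sum>v\<in>M_values. g v)"
proof -
  define V where "V = lam_vals n lam \<union> mu_vals n mu"
  have V: "finite V" "lam ` {1..n+1} \<subseteq> V" "mu ` {1..n} \<subseteq> V"
    by (auto simp: V_def lam_vals_def mu_vals_def)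
  have multiplicity_diff: "real (n_lam n lam v) - real (n_mu n mu v)
      = of_bool (W_shape n lam mu v) - of_bool (M_shape n lam mu v)" for v
    using multiplicity_diff_bounds[of v] by (auto simp: W_shape_def M_shape_def)
  have "(\<Sum>i=1..n+1. g (lam i)) - (\<Sum>i=1..n. g (mu i))
      = (\<Sum>v\<in>V. (real (n_lam n lam v) - real (n_mu n mu v)) * g v)"
    using sum_comp_eq_sum_card_fibres[OF _ V(1,2), of g]
      sum_comp_eq_sum_card_fibres[OF _ V(1,3), of g]
    by (simp add: n_lam_def n_mu_def left_diff_distrib sum_subtractf)
  also have "\<dots> = (\<Sum>v\<in>V \<inter> {v. W_shape n lam mu v}. g v)
      - (\<Sum>v\<in>V \<inter> {v. M_shape n lam mu v}. g v)"
    using V(1) by (simp add: multiplicity_diff left_diff_distrib sum_subtractf)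
  also have "V \<inter> {v. W_shape n lam mu v} = W_values"
    using W_shape_in_lam_vals by (auto simp: V_def W_values_def)
  also have "V \<inter> {v. M_shape n lam mu v} = M_values"
    using M_shape_in_mu_vals by (auto simp: V_def M_values_def)
  finally show ?thesis .
qed

lemma card_W_values: "card W_values = card M_values + 1"
  using sum_lam_minus_sum_mu[of "\<lambda>_. 1"] by simp

lemma sum_W_values_minus_sum_M_values:
  "(\<Sum>i=1..n+1. lam i) - (\<Sum>i=1..n. mu i) = \<Sum>W_values - \<Sum>M_values"
  using sum_lam_minus_sum_mu[of "\<lambda>v. v"] by simp

lemma card_W_values_gt_M_value:
  assumes "\<tau> \<in> M_values"
  shows "card {w\<in>W_values. \<tau> < w} = card {s\<in>M_values. \<tau> < s} + 1"
proof -
  have "real (card {i\<in>{1..n+1}. \<tau> < lam i}) - real (card {i\<in>{1..n}. \<tau> < mu i})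
      = real (card {w\<in>W_values. \<tau> < w}) - real (card {s\<in>M_values. \<tau> < s})"
    using sum_lam_minus_sum_mu[of "\<lambda>v. of_bool (\<tau> < v)"]
    by (simp only: sum_of_bool_eq finite_atLeastAtMost finite_W_values finite_M_values)
      (simp add: Int_def conj_commute)
  then show ?thesis
    using M_shape_card_gt_lam[of \<tau>] assms by (simp add: M_values_def)
qed

lemma r_coef_sq:
  assumes "\<tau> \<in> M_values"
  shows "(r_coef n lam mu \<tau>)\<^sup>2 = - (\<Prod>w\<in>W_values. \<tau> - w) / (\<Prod>s\<in>M_values - {\<tau>}. \<tau> - s)"
proof -
  have "\<tau> \<notin> W_values"
    using assms by (auto simp: W_values_def M_values_def W_shape_def M_shape_def)
  then have "(\<Prod>w\<in>W_values. \<tau> - w)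
      = (-1) ^ (card {s\<in>M_values. \<tau> < s} + 1) * (\<Prod>w\<in>W_values. \<bar>\<tau> - w\<bar>)"
    using prod_eq_neg_one_power_card_neg_mult_prod_abs[OF finite_W_values, of "\<lambda>w. \<tau> - w"]
      card_W_values_gt_M_value[OF assms] by simp
  moreover have "(\<Prod>s\<in>M_values - {\<tau>}. \<tau> - s)
      = (-1) ^ card {s\<in>M_values. \<tau> < s} * (\<Prod>s\<in>M_values - {\<tau>}. \<bar>\<tau> - s\<bar>)"
  proof -
    have "{s \<in> M_values - {\<tau>}. \<tau> - s < 0} = {s\<in>M_values. \<tau> < s}" by auto
    then show ?thesis
      using prod_eq_neg_one_power_card_neg_mult_prod_abs[of "M_values - {\<tau>}" "\<lambda>s. \<tau> - s"]
        finite_M_values by simp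
  qed
  ultimately have nonneg: "- (\<Prod>w\<in>W_values. \<tau> - w) / (\<Prod>s\<in>M_values - {\<tau>}. \<tau> - s) \<ge> 0"
    by (simp add: prod_nonneg)
  have "{\<sigma> \<in> mu_vals n mu. M_shape n lam mu \<sigma> \<and> \<sigma> \<noteq> \<tau>} = M_values - {\<tau>}"
    by (auto simp: M_values_def)
  then have "r_sq_expr n lam mu \<tau> = - (\<Prod>w\<in>W_values. \<tau> - w) / (\<Prod>s\<in>M_values - {\<tau>}. \<tau> - s)"
    by (simp add: r_sq_expr_def W_values_def prod_dividef)
  with nonneg assms show ?thesis by (simp add: r_coef_def M_values_def)
qed

lemma C_coef_eq_neg_prod_div_prod:
  assumes "m \<notin> M_values"
  shows "C_coef n lam mu m = - (\<Prod>w\<in>W_values. m - w) / (\<Prod>s\<in>M_values. m - s)"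
proof -
  have "(\<Sum>\<tau>\<in>M_values. (r_coef n lam mu \<tau>)\<^sup>2 / (m - \<tau>))
      = - (\<Sum>\<tau>\<in>M_values. (\<Prod>w\<in>W_values. \<tau> - w) / (\<Prod>s\<in>M_values - {\<tau>}. \<tau> - s) / (m - \<tau>))"
    by (simp add: r_coef_sq sum_negf[symmetric])
  then show ?thesis
    using prod_div_prod_partial_fraction[OF finite_M_values finite_W_values card_W_values assms]
    unfolding C_coef_def M_values_def[symmetric] sum_W_values_minus_sum_M_values by simp
qed

end

theorem lemma4p5:
  fixes n :: nat and lam mu :: "nat \<Rightarrow> real" and m :: real
  assumes interlace: "\<forall>i\<in>{1..n}. lam i \<ge> mu i \<and> mu i \<ge> lam (i+1)"
    and m_in: "m \<in> mu_vals n mu"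
    and not_M: "\<not> M_shape n lam mu m"
  shows "C_coef n lam mu m = 0 \<longleftrightarrow> W_shape n lam mu m"
proof -
  interpret interlacing n lam mu using interlace by unfold_locales
  have "m \<notin> M_values" using not_M by (simp add: M_values_def)
  then have "C_coef n lam mu m = 0 \<longleftrightarrow> (\<Prod>w\<in>W_values. m - w) = 0"
    using finite_M_values by (simp add: C_coef_eq_neg_prod_div_prod)
  also have "\<dots> \<longleftrightarrow> m \<in> W_values" using finite_W_values by simp
  also have "\<dots> \<longleftrightarrow> W_shape n lam mu m" using W_shape_in_lam_vals by (auto simp: W_values_def)
  finally show ?thesis .
qed

end
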